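(* Let $m=2k+1\ge3$ be odd, and write the Chebyshev polynomial of degree $m$ as $T_m(x)=\sum_{i=0}^{k}c_{2i+1}x^{2i+1}$. Let $s=\max\{v_2(m+1),v_2(m-1)\}$. Then $v_2(c_3)=s$ and $v_2(c_{2i+1})\ge s+1$ for all $1<i\le k$.
   Context: $v_2$ denotes the $2$-adic valuation. For an integer $m\ge0$, the $m$-th Chebyshev polynomial is $$T_m(x)=\sum_{k=0}^{\lfloor m/2\rfloor}(-1)^k\frac{m}{m-k}\binom{m-k}{k}2^{m-2k-1}x^{m-2k}.$$ For odd $m$ it contains only odd powers of $x$. *)

theory Defs
  imports "HOL-Computational_Algebra.Computational_Algebra"
begin

definition chebyshev_T :: "nat \<Rightarrow> rat poly" where
  "chebyshev_T m = (\<Sum>k\<le>m div 2.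
      monom ((-1) ^ k * (of_nat m / of_nat (m - k)) * of_nat ((m - k) choose k)
             * (2::rat) powi (int m - 2 * int k - 1)) (m - 2 * k))"

end

theory Submission
  imports Defs
begin

text \<open>The coefficient \<open>c\<close> of \<open>x^(2i+1)\<close> in \<open>T_m\<close> equals
  \<open>\<plusminus>4^i (C(k+i+1, 2i+1) + C(k+i, 2i+1))\<close>, an integer, and
  \<open>c (2i+1)! = \<plusminus>m \<Prod>j<i. (m - 2j - 1)(m + 2j + 1)\<close>.
  Each factor \<open>(m - 2j - 1)(m + 2j + 1) = 2(k - j) \<cdot> 2(k + j + 1)\<close> is a product of two even
  numbers whose halves have opposite parity, so its 2-adic valuation is one more than the larger
  of the valuations of the two even numbers: at least 3 in general, and exactly \<open>s + 1\<close> for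
  \<open>j = 0\<close>. As \<open>m\<close> is odd and \<open>v2((2i+1)!) = v2((2i)!) < 2i\<close>, this gives \<open>v2(c) = (s + 1) - 1\<close>
  for \<open>i = 1\<close> and \<open>v2(c) \<ge> (s + 1) + 3(i - 1) - (2i - 1) \<ge> s + 1\<close> for \<open>i \<ge> 2\<close>.\<close>

lemma multiplicity_of_nat_int: "multiplicity (int p) (int n) = multiplicity p n"
proof (cases "n = 0 \<or> p = 1")
  case True
  then show ?thesis by (auto simp: multiplicity_unit_left)
next
  case False
  then have "n \<noteq> 0" "\<not> is_unit p" by auto
  show ?thesis
  proof (rule multiplicity_eqI)
    show "int p ^ multiplicity p n dvd int n"
      by (metis multiplicity_dvd of_nat_dvd_iff of_nat_power)
    show "\<not> int p ^ Suc (multiplicity p n) dvd int n"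
      using power_dvd_iff_le_multiplicity[OF \<open>n \<noteq> 0\<close> \<open>\<not> is_unit p\<close>, of "Suc (multiplicity p n)"]
      by (metis Suc_n_not_le_n of_nat_dvd_iff of_nat_power)
  qed
qed

lemma multiplicity_two_fact_Suc_double:
  "multiplicity (2::nat) (fact (Suc (2 * q))) = multiplicity 2 (fact (2 * q) :: nat)"
proof -
  have "multiplicity (2::nat) (Suc (2 * q)) = 0"
    by (intro not_dvd_imp_multiplicity_0) simp
  then show ?thesis
    by (simp add: fact_Suc prime_elem_multiplicity_mult_distrib del: mult_Suc)
qed

lemma multiplicity_two_fact_double:
  "multiplicity (2::nat) (fact (2 * q)) = q + multiplicity 2 (fact q :: nat)"
proof (induction q)
  case (Suc q)
  have "fact (2 * Suc q) = 2 * (Suc q * fact (Suc (2 * q)) :: nat)"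
    by (simp add: fact_Suc)
  then have "multiplicity (2::nat) (fact (2 * Suc q))
      = Suc (multiplicity 2 (Suc q) + multiplicity 2 (fact (Suc (2 * q)) :: nat))"
    by (simp add: multiplicity_times_same prime_elem_multiplicity_mult_distrib del: mult_Suc fact_Suc)
  also have "\<dots> = Suc q + multiplicity 2 (Suc q * fact q :: nat)"
    by (simp add: multiplicity_two_fact_Suc_double Suc.IH prime_elem_multiplicity_mult_distrib
        del: mult_Suc fact_Suc)
  finally show ?case by simp
qed simp

lemma multiplicity_two_fact_less: "0 < n \<Longrightarrow> multiplicity (2::nat) (fact n) < n"
proof (induction n rule: less_induct)
  case (less n)
  obtain q where q: "n = 2 * q \<or> n = Suc (2 * q)"
    by (metis oddE evenE Suc_eq_plus1)
  then have "multiplicity (2::nat) (fact q) < q \<or> q = 0"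
    using less.IH less.prems by (cases "q = 0") auto
  then show ?case
    using q less.prems
    by (auto simp: multiplicity_two_fact_Suc_double multiplicity_two_fact_double simp del: fact_Suc)
qed

lemma multiplicity_two_double_mult_double:
  fixes b c :: nat
  assumes "odd (b + c)" "b \<noteq> 0" "c \<noteq> 0"
  shows "multiplicity 2 (2 * b * (2 * c)) = max (multiplicity 2 (2 * b)) (multiplicity 2 (2 * c)) + 1"
    and "3 \<le> multiplicity 2 (2 * b * (2 * c))"
proof -
  have v: "multiplicity (2::nat) (2 * x) = Suc (multiplicity 2 x)" if "x \<noteq> 0" for x :: nat
    using that by (simp add: multiplicity_times_same)
  have prod: "multiplicity (2::nat) (2 * b * (2 * c)) = multiplicity 2 (2 * b) + multiplicity 2 (2 * c)"
    using assms by (intro prime_elem_multiplicity_mult_distrib) simp_all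
  have "multiplicity (2::nat) b = 0 \<and> multiplicity 2 c \<ge> 1 \<or> multiplicity (2::nat) c = 0 \<and> multiplicity 2 b \<ge> 1"
  proof (cases "even b")
    case True
    then have "multiplicity (2::nat) b \<ge> 1"
      using assms(2) multiplicity_geI[of b 2 1] by simp
    moreover have "multiplicity (2::nat) c = 0"
      using True assms(1) by (intro not_dvd_imp_multiplicity_0) simp
    ultimately show ?thesis by simp
  next
    case False
    then have "multiplicity (2::nat) b = 0"
      by (intro not_dvd_imp_multiplicity_0) simp
    moreover have "multiplicity (2::nat) c \<ge> 1"
      using False assms(1,3) multiplicity_geI[of c 2 1] by simp
    ultimately show ?thesis by simp
  qed
  then show "multiplicity 2 (2 * b * (2 * c)) = max (multiplicity 2 (2 * b)) (multiplicity 2 (2 * c)) + 1"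
    and "3 \<le> multiplicity 2 (2 * b * (2 * c))"
    using assms(2,3) unfolding prod v[OF assms(2)] v[OF assms(3)] by auto
qed

lemma binomial_Suc_add_binomial:
  assumes "r \<le> Suc n"
  shows "Suc n * ((Suc n choose r) + (n choose r)) = (2 * Suc n - r) * (Suc n choose r)"
proof -
  have "Suc n * (n choose r) = (Suc n - r) * (Suc n choose r)"
    using binomial_absorb_comp[of "Suc n" r] by simp
  moreover have "2 * Suc n - r = Suc n + (Suc n - r)"
    using assms by simp
  ultimately show ?thesis
    by (simp only: add_mult_distrib add_mult_distrib2)
qed

lemma fact_add_eq_fact_diff_mult_prod:
  fixes k i :: nat
  assumes "i \<le> k"
  shows "fact (k + i) = fact (k - i) * (\<Prod>j<i. (k - j) * (k + j + 1))"
  using assms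
proof (induction i)
  case (Suc i)
  have "fact (k + Suc i) = (k + i + 1) * fact (k + i)"
    by simp
  also have "fact (k + i) = fact (k - i) * (\<Prod>j<i. (k - j) * (k + j + 1))"
    using Suc by simp
  also have "fact (k - i) = (k - i) * fact (k - Suc i)"
    using Suc.prems fact_Suc[of "k - Suc i", where 'a = nat] by (simp add: Suc_diff_Suc)
  finally show ?case
    by (simp only: prod.lessThan_Suc mult_ac)
qed simp

text \<open>The factor \<open>4^i (2k+1)/(k+i+1) \<cdot> C(k+i+1, 2i+1)\<close> of the defining formula, rewritten as
  a sum of two binomial coefficients to make integrality visible.\<close>
definition chebyshev_T_odd_coeff_abs :: "nat \<Rightarrow> nat \<Rightarrow> nat" where
  "chebyshev_T_odd_coeff_abs k i =
     4 ^ i * (((k + i + 1) choose (2 * i + 1)) + ((k + i) choose (2 * i + 1)))"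

lemma chebyshev_T_odd_coeff_abs_pos:
  "i \<le> k \<Longrightarrow> 0 < chebyshev_T_odd_coeff_abs k i"
  by (simp add: chebyshev_T_odd_coeff_abs_def)

lemma coeff_chebyshev_T_odd:
  assumes "i \<le> k"
  shows "coeff (chebyshev_T (2 * k + 1)) (2 * i + 1) = (-1) ^ (k - i) * of_nat (chebyshev_T_odd_coeff_abs k i)"
proof -
  define C where "C = (k + i + 1) choose (2 * i + 1)"
  have "(k + i + 1) * (C + ((k + i) choose (2 * i + 1))) = (2 * k + 1) * C"
    using binomial_Suc_add_binomial[of "2 * i + 1" "k + i"] assms by (simp add: C_def)
  then have quotient: "(of_nat (2 * k + 1) / of_nat (k + i + 1)) * of_nat C
      = (of_nat (C + ((k + i) choose (2 * i + 1))) :: rat)"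
    by (simp add: field_simps flip: of_nat_mult)
  define summand where "summand j = (-1) ^ j * (of_nat (2 * k + 1) / of_nat (2 * k + 1 - j))
      * of_nat ((2 * k + 1 - j) choose j) * (2::rat) powi (int (2 * k + 1) - 2 * int j - 1)" for j
  have "coeff (chebyshev_T (2 * k + 1)) (2 * i + 1) = (\<Sum>j\<le>k. if j = k - i then summand j else 0)"
    unfolding chebyshev_T_def coeff_sum coeff_monom summand_def
    by (intro sum.cong) (use assms in auto)
  also have "\<dots> = summand (k - i)"
    using assms by simp
  also have "\<dots> = (-1) ^ (k - i) * ((of_nat (2 * k + 1) / of_nat (k + i + 1)) * of_nat C) * 2 ^ (2 * i)"
  proof -
    have "2 * k + 1 - (k - i) = k + i + 1" "int (2 * k + 1) - 2 * int (k - i) - 1 = int (2 * i)"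
      using assms by simp_all
    moreover have "(k + i + 1) choose (k - i) = C"
      using binomial_symmetric[of "2 * i + 1" "k + i + 1"] assms by (simp add: C_def)
    ultimately show ?thesis
      unfolding summand_def by (simp only: mult.assoc power_int_of_nat)
  qed
  also have "\<dots> = (-1) ^ (k - i) * of_nat (chebyshev_T_odd_coeff_abs k i)"
    by (simp only: quotient) (simp add: chebyshev_T_odd_coeff_abs_def C_def power_mult)
  finally show ?thesis .
qed

lemma chebyshev_T_odd_coeff_abs_mult_fact:
  assumes "i \<le> k"
  shows "chebyshev_T_odd_coeff_abs k i * fact (2 * i + 1) = (2 * k + 1) * (\<Prod>j<i. 2 * (k - j) * (2 * (k + j + 1)))"
proof -
  define C where "C = (k + i + 1) choose (2 * i + 1)"
  define D where "D = (k + i) choose (2 * i + 1)"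
  define P where "P = (\<Prod>j<i. (k - j) * (k + j + 1))"
  have binom: "(k + i + 1) * (C + D) = (2 * k + 1) * C"
    using binomial_Suc_add_binomial[of "2 * i + 1" "k + i"] assms by (simp add: C_def D_def)
  have fact_C: "C * fact (2 * i + 1) * fact (k - i) = (k + i + 1) * fact (k + i)"
    using binomial_fact_lemma[of "2 * i + 1" "k + i + 1"] assms by (simp add: C_def algebra_simps)
  have "(k + i + 1) * ((C + D) * fact (2 * i + 1) * fact (k - i))
      = (2 * k + 1) * (C * fact (2 * i + 1) * fact (k - i))"
    by (simp only: mult.assoc[symmetric] binom)
  also have "\<dots> = (k + i + 1) * ((2 * k + 1) * fact (k + i))"
    unfolding fact_C by (rule mult.left_commute)
  finally have "(C + D) * fact (2 * i + 1) * fact (k - i) = (2 * k + 1) * fact (k + i)"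
    by (subst (asm) mult_cancel_left) simp
  also have "\<dots> = (2 * k + 1) * fact (k - i) * P"
    by (simp only: fact_add_eq_fact_diff_mult_prod[OF assms] P_def mult.assoc)
  finally have fact_eq: "(C + D) * fact (2 * i + 1) * fact (k - i) = (2 * k + 1) * fact (k - i) * P" .
  have "2 * a * (2 * b) = 4 * (a * b)" for a b :: nat
    by simp
  then have prod_eq: "(\<Prod>j<i. 2 * (k - j) * (2 * (k + j + 1))) = 4 ^ i * P"
    by (simp only: P_def prod.distrib prod_constant card_lessThan)
  have "chebyshev_T_odd_coeff_abs k i * fact (2 * i + 1) * fact (k - i)
      = 4 ^ i * ((C + D) * fact (2 * i + 1) * fact (k - i))"
    by (simp only: chebyshev_T_odd_coeff_abs_def C_def D_def mult_ac)
  also have "\<dots> = (2 * k + 1) * (4 ^ i * P) * fact (k - i)"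
    unfolding fact_eq by (simp only: mult_ac)
  also have "\<dots> = (2 * k + 1) * (\<Prod>j<i. 2 * (k - j) * (2 * (k + j + 1))) * fact (k - i)"
    by (simp only: prod_eq)
  finally show ?thesis
    by (subst (asm) mult_cancel_right) simp
qed

lemma multiplicity_two_chebyshev_T_odd_coeff_abs_eq:
  assumes "i \<le> k"
  shows "multiplicity 2 (chebyshev_T_odd_coeff_abs k i) + multiplicity 2 (fact (2 * i + 1) :: nat)
    = (\<Sum>j<i. multiplicity 2 (2 * (k - j) * (2 * (k + j + 1))))"
proof -
  define f where "f j = 2 * (k - j) * (2 * (k + j + 1))" for j
  have two: "prime_elem (2::nat)"
    by simp
  have "chebyshev_T_odd_coeff_abs k i \<noteq> 0"
    using chebyshev_T_odd_coeff_abs_pos[OF assms] by simp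
  then have "multiplicity 2 (chebyshev_T_odd_coeff_abs k i) + multiplicity 2 (fact (2 * i + 1) :: nat)
      = multiplicity 2 (chebyshev_T_odd_coeff_abs k i * fact (2 * i + 1))"
    by (simp add: prime_elem_multiplicity_mult_distrib[OF two])
  also have "\<dots> = multiplicity 2 ((2 * k + 1) * (\<Prod>j<i. f j))"
    by (simp only: chebyshev_T_odd_coeff_abs_mult_fact[OF assms] f_def)
  also have "\<dots> = (\<Sum>j<i. multiplicity 2 (f j))"
  proof -
    have "multiplicity 2 (2 * k + 1) = 0"
      by (intro not_dvd_imp_multiplicity_0) simp
    moreover have "0 \<notin> f ` {..<i}"
      using assms by (auto simp: f_def)
    ultimately show ?thesis
      by (subst prime_elem_multiplicity_mult_distrib[OF two])
        (auto simp: prime_elem_multiplicity_prod_distrib[OF two])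
  qed
  finally show ?thesis
    by (simp only: f_def)
qed

lemma chebyshev_T_odd_coeff_integral:
  assumes "i \<le> k"
  shows "\<exists>c::int. coeff (chebyshev_T (2 * k + 1)) (2 * i + 1) = of_int c \<and> c \<noteq> 0
           \<and> multiplicity 2 c = multiplicity 2 (chebyshev_T_odd_coeff_abs k i)"
proof (intro exI conjI)
  let ?c = "(-1) ^ (k - i) * int (chebyshev_T_odd_coeff_abs k i)"
  show "coeff (chebyshev_T (2 * k + 1)) (2 * i + 1) = of_int ?c"
    using coeff_chebyshev_T_odd[OF assms] by simp
  show "?c \<noteq> 0"
    using chebyshev_T_odd_coeff_abs_pos[OF assms] by simp
  show "multiplicity 2 ?c = multiplicity 2 (chebyshev_T_odd_coeff_abs k i)"
    using multiplicity_of_nat_int[of 2] by (simp add: multiplicity_times_unit_right)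
qed

lemma multiplicity_two_chebyshev_T_odd_coeff_abs_1:
  assumes "k \<noteq> 0"
  shows "multiplicity 2 (chebyshev_T_odd_coeff_abs k 1) = max (multiplicity 2 (2 * k)) (multiplicity 2 (2 * (k + 1)))"
proof -
  have "multiplicity 2 (fact 3 :: nat) = 1"
    using multiplicity_two_fact_Suc_double[of 1] by (simp add: fact_numeral)
  moreover have "multiplicity 2 (2 * k * (2 * (k + 1))) = max (multiplicity 2 (2 * k)) (multiplicity 2 (2 * (k + 1))) + 1"
    using multiplicity_two_double_mult_double(1)[of k "k + 1"] assms by simp
  ultimately show ?thesis
    using multiplicity_two_chebyshev_T_odd_coeff_abs_eq[of 1 k] assms by simp
qed

lemma multiplicity_two_chebyshev_T_odd_coeff_abs_gt:
  assumes "1 < i" "i \<le> k"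
  shows "max (multiplicity 2 (2 * k)) (multiplicity 2 (2 * (k + 1))) < multiplicity 2 (chebyshev_T_odd_coeff_abs k i)"
proof -
  define v where "v j = multiplicity (2::nat) (2 * (k - j) * (2 * (k + j + 1)))" for j
  obtain n where i: "i = Suc n"
    using assms(1) by (cases i) auto
  have "v 0 = max (multiplicity 2 (2 * k)) (multiplicity 2 (2 * (k + 1))) + 1"
    using multiplicity_two_double_mult_double(1)[of k "k + 1"] assms by (simp add: v_def)
  moreover have "3 * n \<le> (\<Sum>j<n. v (Suc j))"
  proof -
    have "3 \<le> v (Suc j)" if "j < n" for j
      unfolding v_def by (intro multiplicity_two_double_mult_double(2)) (use that i assms in auto)
    then show ?thesis
      using sum_bounded_below[of "{..<n}" "3::nat" "\<lambda>j. v (Suc j)"] by (simp add: mult.commute)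
  qed
  moreover have "multiplicity 2 (fact (2 * i + 1) :: nat) < 2 * i"
    using multiplicity_two_fact_Suc_double[of i] multiplicity_two_fact_less[of "2 * i"] assms by simp
  moreover have "multiplicity 2 (chebyshev_T_odd_coeff_abs k i) + multiplicity 2 (fact (2 * i + 1) :: nat)
      = v 0 + (\<Sum>j<n. v (Suc j))"
    using multiplicity_two_chebyshev_T_odd_coeff_abs_eq[OF assms(2)]
    by (simp only: i sum.lessThan_Suc_shift v_def)
  ultimately show ?thesis
    using i assms(1) by linarith
qed

theorem lemma3p1:
  fixes m k :: nat and s :: nat
  assumes "m = 2 * k + 1" and "m \<ge> 3"
    and "s = max (multiplicity (2::int) (int m + 1)) (multiplicity (2::int) (int m - 1))"
  shows "(\<exists>c::int. coeff (chebyshev_T m) 3 = of_int c \<and> c \<noteq> 0 \<and> multiplicity 2 c = s)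
       \<and> (\<forall>i. 1 < i \<and> i \<le> k \<longrightarrow>
            (\<exists>c::int. coeff (chebyshev_T m) (2 * i + 1) = of_int c \<and> c \<noteq> 0
                      \<and> multiplicity 2 c \<ge> s + 1))"
proof -
  have "k \<noteq> 0"
    using assms(1,2) by simp
  have "int m + 1 = int (2 * (k + 1))" "int m - 1 = int (2 * k)"
    using assms(1) by simp_all
  moreover have "multiplicity (2::int) (int n) = multiplicity 2 n" for n
    using multiplicity_of_nat_int[of 2 n] by simp
  ultimately have s: "s = max (multiplicity 2 (2 * k)) (multiplicity 2 (2 * (k + 1)))"
    using assms(3) by (simp only: max.commute)
  show ?thesis
  proof (intro conjI allI impI)
    show "\<exists>c::int. coeff (chebyshev_T m) 3 = of_int c \<and> c \<noteq> 0 \<and> multiplicity 2 c = s"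
      using chebyshev_T_odd_coeff_integral[of 1 k] multiplicity_two_chebyshev_T_odd_coeff_abs_1 \<open>k \<noteq> 0\<close>
      by (simp add: assms(1) s numeral_3_eq_3)
    fix i
    assume "1 < i \<and> i \<le> k"
    then show "\<exists>c::int. coeff (chebyshev_T m) (2 * i + 1) = of_int c \<and> c \<noteq> 0 \<and> multiplicity 2 c \<ge> s + 1"
      using chebyshev_T_odd_coeff_integral[of i k] multiplicity_two_chebyshev_T_odd_coeff_abs_gt[of i k]
      by (auto simp: assms(1) s)
  qed
qed

end
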